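(* Let $m=2k+1$ with $k\in\mathbb{N}$. For every $\beta\in(1,\frac{k+1+\sqrt{k^2+6k+5}}{2})$, every $x\in(0,\frac{m}{\beta-1})$ has uncountably many $\beta$-expansions, i.e. $\Sigma_{\beta,m}(x)$ is uncountable.
   Context: $\Sigma_{\beta,m}(x)=\{(\epsilon_i)_{i=1}^\infty\in\{0,\ldots,m\}^{\mathbb{N}}:\sum_{i\ge1}\epsilon_i\beta^{-i}=x\}$; its elements are the $\beta$-expansions of $x$. *)

theory Defs
  imports "HOL-Analysis.Analysis"
begin

text \<open>A sequence (eps_i) for i = 1,2,... is represented as a function e :: nat => nat
  with e n = eps_(n+1); hence the value is sum over n of e n * beta^-(n+1).\<close>
definition beta_expansions :: "real \<Rightarrow> nat \<Rightarrow> real \<Rightarrow> (nat \<Rightarrow> nat) set" where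
  "beta_expansions \<beta> m x =
     {e. (\<forall>n. e n \<le> m) \<and> ((\<lambda>n. real (e n) / \<beta> ^ (Suc n)) sums x)}"

end

theory Submission imports Defs begin

text \<open>Write \<open>M = m/(\<beta>-1)\<close>, so that every point of the open interval \<open>(0, M)\<close> can be sent back
  into \<open>(0, M)\<close> by some map \<open>y \<mapsto> \<beta>y - d\<close> with an admissible digit \<open>d \<le> m\<close>; iterating produces a
  \<open>\<beta>\<close>-expansion of the starting point. Call \<open>y\<close> a switch point if two different digits are
  admissible. Away from switch points the digit is forced, and for \<open>m = 2k+1\<close> and \<open>\<beta>\<close> below
  the stated bound a forced orbit either lands in the switch region or is stuck near an
  endpoint, where it is repelled geometrically; so every orbit meets switch points
  infinitely often. Choosing the digit freely at each of them embeds the subsets of \<open>\<nat>\<close>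
  injectively into the set of expansions of \<open>x\<close>.\<close>

definition admissible_digit :: "real \<Rightarrow> nat \<Rightarrow> real \<Rightarrow> real \<Rightarrow> nat \<Rightarrow> bool" where
  "admissible_digit \<beta> m M y d \<longleftrightarrow> d \<le> m \<and> 0 < \<beta> * y - d \<and> \<beta> * y - d < M"

definition switch_point :: "real \<Rightarrow> nat \<Rightarrow> real \<Rightarrow> real \<Rightarrow> bool" where
  "switch_point \<beta> m M y \<longleftrightarrow>
     (\<exists>d d'. d \<noteq> d' \<and> admissible_digit \<beta> m M y d \<and> admissible_digit \<beta> m M y d')"

lemma admissible_digit_exists:
  assumes "1 < \<beta>" "M * (\<beta> - 1) = m" "1 < M" "0 < y" "y < M"
  shows "\<exists>d. admissible_digit \<beta> m M y d"
proof (cases "\<beta> * y - m > 0")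
  case True
  have "\<beta> * y - m < \<beta> * M - m" using assms by simp
  also have "\<dots> = M" using assms(2) by (simp add: algebra_simps)
  finally show ?thesis using True unfolding admissible_digit_def by auto
next
  case False
  \<comment> \<open>the largest digit below \<open>\<beta>y\<close> leaves a remainder in \<open>(0, 1] \<subseteq> (0, M)\<close>\<close>
  define d where "d = nat (\<lceil>\<beta> * y\<rceil> - 1)"
  have "0 < \<beta> * y" using assms by simp
  then have "real d = real_of_int \<lceil>\<beta> * y\<rceil> - 1" unfolding d_def by (simp add: one_le_ceiling)
  moreover have "\<lceil>\<beta> * y\<rceil> \<le> int m" using False by (simp add: ceiling_le_iff)
  ultimately show ?thesis
    using \<open>1 < M\<close> unfolding admissible_digit_def
    by (intro exI[of _ d]) (linarith | simp add: d_def)+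
qed

lemma forced_digit_outside_switch_region:
  assumes "1 < \<beta>" "M * (\<beta> - 1) = m" "m = 2 * k + 1" "\<beta> < M + k"
    and "\<not> switch_point \<beta> m M y" "admissible_digit \<beta> m M y d"
  shows "(d = 0 \<and> \<beta> * y \<le> 1) \<or> (d = m \<and> M + m - 1 \<le> \<beta> * y)
         \<or> switch_point \<beta> m M (\<beta> * y - d)"
proof -
  have \<beta>M: "\<beta> * M = M + m" using assms(2) by (simp add: algebra_simps)
  have other: "\<not> admissible_digit \<beta> m M y d'" if "d' \<noteq> d" for d'
    using assms(5,6) that unfolding switch_point_def by blast
  have d: "d \<le> m" "0 < \<beta> * y - d" "\<beta> * y - d < M"
    using assms(6) unfolding admissible_digit_def by auto
  consider "d = 0" | "d = m" | "0 < d" "d < m" using d(1) by linarith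
  then show ?thesis
  proof cases
    case 1
    then have "\<not> admissible_digit \<beta> m M y 1" using other by simp
    then show ?thesis using 1 d assms(3) unfolding admissible_digit_def by auto
  next
    case 2
    have "m \<noteq> 0" using assms(3) by simp
    then have "\<not> admissible_digit \<beta> m M y (m - 1)" using other 2 by simp
    then show ?thesis using 2 d \<open>m \<noteq> 0\<close> unfolding admissible_digit_def by (auto simp: of_nat_diff)
  next
    case 3
    define z where "z = \<beta> * y - d"
    have "\<not> admissible_digit \<beta> m M y (d - 1)" "\<not> admissible_digit \<beta> m M y (d + 1)"
      using other 3 by auto
    then have "M - 1 \<le> z" "z \<le> 1"
      using d 3 unfolding admissible_digit_def z_def by (auto simp: of_nat_diff)
    have "\<beta> * (M - 1) \<le> \<beta> * z" "\<beta> * z \<le> \<beta>"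
      using \<open>M - 1 \<le> z\<close> \<open>z \<le> 1\<close> assms(1) by simp_all
    then have "k + 1 < \<beta> * z" "\<beta> * z < k + M" using \<beta>M assms(3,4) by (simp_all add: algebra_simps)
    then have "admissible_digit \<beta> m M z k" "admissible_digit \<beta> m M z (k + 1)"
      using assms(3) unfolding admissible_digit_def by auto
    then show ?thesis unfolding switch_point_def z_def by (metis n_not_Suc_n Suc_eq_plus1)
  qed
qed

lemma geometric_orbit_unbounded:
  fixes w :: "nat \<Rightarrow> real"
  assumes "1 < \<beta>" "0 < w 0" "\<And>i. w (Suc i) = \<beta> * w i"
  obtains n where "1 < w n"
proof -
  have w: "w n = \<beta> ^ n * w 0" for n by (induction n) (simp_all add: assms(3))
  obtain n where "1 / w 0 < \<beta> ^ n" using real_arch_pow[OF assms(1)] by blast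
  then have "1 < w n" using w[of n] assms(2) by (simp add: field_simps)
  then show thesis by (rule that)
qed

lemma orbit_meets_switch_point:
  assumes "1 < \<beta>" "M * (\<beta> - 1) = m" "m = 2 * k + 1" "\<beta> < M + k"
    and bounded: "\<And>i. 0 < z i \<and> z i < M"
    and digits: "\<And>i. admissible_digit \<beta> m M (z i) (d i)"
    and step: "\<And>i. z (Suc i) = \<beta> * z i - d i"
  shows "\<exists>i. switch_point \<beta> m M (z i)"
proof (rule ccontr)
  assume no_switch: "\<nexists>i. switch_point \<beta> m M (z i)"
  have \<beta>M: "\<beta> * M = M + m" using assms(2) by (simp add: algebra_simps)
  have \<beta>_less: "\<beta> < M + m - 1" using assms(3,4) by simp
  define near_0 where "near_0 i \<longleftrightarrow> \<beta> * z i \<le> 1 \<and> z (Suc i) = \<beta> * z i" for i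
  define near_M where "near_M i \<longleftrightarrow> M + m - 1 \<le> \<beta> * z i \<and> M - z (Suc i) = \<beta> * (M - z i)" for i
  have near: "near_0 i \<or> near_M i" for i
  proof -
    have "\<not> switch_point \<beta> m M (\<beta> * z i - d i)" using no_switch step[of i] by metis
    then have "(d i = 0 \<and> \<beta> * z i \<le> 1) \<or> (d i = m \<and> M + m - 1 \<le> \<beta> * z i)"
      using forced_digit_outside_switch_region[OF assms(1-4) _ digits] no_switch by blast
    then show ?thesis
      using step[of i] \<beta>M unfolding near_0_def near_M_def by (auto simp: algebra_simps)
  qed
  have near_0_Suc: "near_0 (Suc i)" if "near_0 i" for i
  proof -
    have "\<beta> * z (Suc i) \<le> \<beta>" using that assms(1) unfolding near_0_def by simp
    then show ?thesis using near[of "Suc i"] \<beta>_less unfolding near_M_def by auto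
  qed
  have near_M_Suc: "near_M (Suc i)" if "near_M i" for i
  proof -
    have "M - z (Suc i) \<le> 1" using that \<beta>M unfolding near_M_def by (simp add: algebra_simps)
    then have "\<beta> * (M - z (Suc i)) \<le> \<beta>" using assms(1) by simp
    then show ?thesis using near[of "Suc i"] \<beta>_less \<beta>M unfolding near_0_def by (auto simp: algebra_simps)
  qed
  show False
  proof (cases "near_0 0")
    case True
    then have "near_0 i" for i by (induction i) (simp_all add: near_0_Suc)
    then obtain n where "1 < z n"
      using geometric_orbit_unbounded[OF assms(1), of z] bounded unfolding near_0_def by blast
    moreover have "z n \<le> \<beta> * z n" using bounded[of n] assms(1) by simp
    ultimately show False using \<open>near_0 n\<close> unfolding near_0_def by simp
  next
    case False
    then have "near_M i" for i using near by (induction i) (auto intro: near_M_Suc)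
    then obtain n where "1 < M - z n"
      using geometric_orbit_unbounded[OF assms(1), of "\<lambda>i. M - z i"] bounded unfolding near_M_def by force
    moreover have "M - z n \<le> \<beta> * (M - z n)" using bounded[of n] assms(1) by simp
    ultimately show False using \<open>near_M n\<close> \<beta>M unfolding near_M_def by (simp add: algebra_simps)
  qed
qed

lemma uncountable_UNIV_nat_set: "uncountable (UNIV :: nat set set)"
  by (metis Cantors_theorem Pow_UNIV range_from_nat_into UNIV_not_empty)

locale recurrent_switching =
  fixes \<beta> :: real and m :: nat and M x :: real
  assumes beta_gt_1: "1 < \<beta>" and M_eq: "M * (\<beta> - 1) = m" and M_gt_1: "1 < M"
    and x_pos: "0 < x" and x_less_M: "x < M"
    and orbits_meet_switch_points: "\<And>z d. (\<And>i. 0 < z i \<and> z i < M) \<Longrightarrow>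
      (\<And>i. admissible_digit \<beta> m M (z i) (d i)) \<Longrightarrow> (\<And>i. z (Suc i) = \<beta> * z i - d i) \<Longrightarrow>
      \<exists>i. switch_point \<beta> m M (z i)"
begin

definition low_digit :: "real \<Rightarrow> nat" where
  "low_digit y = (LEAST d. admissible_digit \<beta> m M y d)"

definition high_digit :: "real \<Rightarrow> nat" where
  "high_digit y = (LEAST d. admissible_digit \<beta> m M y d \<and> d \<noteq> low_digit y)"

text \<open>The choice set \<open>S\<close> decides the digit at the \<open>j\<close>-th switch point of the orbit
  (counting from \<open>0\<close>): the high digit if \<open>j \<in> S\<close>, the low one otherwise.\<close>

definition chosen_digit :: "nat set \<Rightarrow> real \<Rightarrow> nat \<Rightarrow> nat" where
  "chosen_digit S y j = (if switch_point \<beta> m M y \<and> j \<in> S then high_digit y else low_digit y)"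

primrec orbit_and_switch_count :: "nat set \<Rightarrow> nat \<Rightarrow> real \<times> nat" where
  "orbit_and_switch_count S 0 = (x, 0)"
| "orbit_and_switch_count S (Suc n) =
     (case orbit_and_switch_count S n of (y, j) \<Rightarrow>
        (\<beta> * y - chosen_digit S y j, if switch_point \<beta> m M y then Suc j else j))"

definition orbit :: "nat set \<Rightarrow> nat \<Rightarrow> real" where
  "orbit S n = fst (orbit_and_switch_count S n)"

definition switch_count :: "nat set \<Rightarrow> nat \<Rightarrow> nat" where
  "switch_count S n = snd (orbit_and_switch_count S n)"

definition expansion :: "nat set \<Rightarrow> nat \<Rightarrow> nat" where
  "expansion S n = chosen_digit S (orbit S n) (switch_count S n)"

lemma orbit_0: "orbit S 0 = x"
  by (simp add: orbit_def)

lemma orbit_Suc: "orbit S (Suc n) = \<beta> * orbit S n - expansion S n"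
  by (simp add: orbit_def switch_count_def expansion_def split: prod.split)

lemma switch_count_0: "switch_count S 0 = 0"
  by (simp add: switch_count_def)

lemma switch_count_Suc:
  "switch_count S (Suc n) = (if switch_point \<beta> m M (orbit S n) then Suc (switch_count S n) else switch_count S n)"
  by (simp add: orbit_def switch_count_def split: prod.split)

lemma low_digit_admissible: "0 < y \<Longrightarrow> y < M \<Longrightarrow> admissible_digit \<beta> m M y (low_digit y)"
  unfolding low_digit_def using admissible_digit_exists[OF beta_gt_1 M_eq M_gt_1] by (metis LeastI_ex)

lemma high_digit_admissible:
  assumes "switch_point \<beta> m M y"
  shows "admissible_digit \<beta> m M y (high_digit y)" "high_digit y \<noteq> low_digit y"
proof -
  have "\<exists>d. admissible_digit \<beta> m M y d \<and> d \<noteq> low_digit y"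
    using assms unfolding switch_point_def by metis
  then show "admissible_digit \<beta> m M y (high_digit y)" "high_digit y \<noteq> low_digit y"
    unfolding high_digit_def by (metis (mono_tags, lifting) LeastI_ex)+
qed

lemma chosen_digit_admissible:
  "0 < y \<Longrightarrow> y < M \<Longrightarrow> admissible_digit \<beta> m M y (chosen_digit S y j)"
  using low_digit_admissible high_digit_admissible unfolding chosen_digit_def by auto

lemma orbit_in_range: "0 < orbit S n \<and> orbit S n < M"
proof (induction n)
  case 0
  then show ?case using x_pos x_less_M by (simp add: orbit_0)
next
  case (Suc n)
  then have "admissible_digit \<beta> m M (orbit S n) (expansion S n)"
    unfolding expansion_def by (simp add: chosen_digit_admissible)
  then show ?case unfolding orbit_Suc admissible_digit_def by simp
qed

lemma expansion_admissible: "admissible_digit \<beta> m M (orbit S n) (expansion S n)"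
  using orbit_in_range unfolding expansion_def by (simp add: chosen_digit_admissible)

lemma expansion_partial_sum: "(\<Sum>i<n. expansion S i / \<beta> ^ Suc i) = x - orbit S n / \<beta> ^ n"
proof (induction n)
  case 0
  then show ?case by (simp add: orbit_0)
next
  case (Suc n)
  have "\<beta> \<noteq> 0" using beta_gt_1 by simp
  with Suc show ?case by (simp add: orbit_Suc diff_divide_distrib)
qed

lemma expansion_sums: "(\<lambda>i. expansion S i / \<beta> ^ Suc i) sums x"
proof -
  have upper: "orbit S n / \<beta> ^ n \<le> M * inverse (\<beta> ^ n)" for n
  proof -
    have "orbit S n / \<beta> ^ n \<le> M / \<beta> ^ n"
      using orbit_in_range[of S n] beta_gt_1 by (intro divide_right_mono) auto
    then show ?thesis by (simp add: divide_inverse)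
  qed
  have lower: "0 \<le> orbit S n / \<beta> ^ n" for n
    using orbit_in_range[of S n] beta_gt_1 by simp
  have "(\<lambda>n. M * inverse (\<beta> ^ n)) \<longlonglongrightarrow> 0"
    using beta_gt_1 by (intro tendsto_mult_right_zero LIMSEQ_inverse_realpow_zero)
  then have "(\<lambda>n. orbit S n / \<beta> ^ n) \<longlonglongrightarrow> 0"
    by (rule tendsto_sandwich[OF always_eventually always_eventually tendsto_const, rotated 2])
      (simp_all add: upper lower)
  then have "(\<lambda>n. x - orbit S n / \<beta> ^ n) \<longlonglongrightarrow> x - 0"
    by (intro tendsto_diff tendsto_const)
  then show ?thesis unfolding sums_def expansion_partial_sum by simp
qed

lemma expansion_in_beta_expansions: "expansion S \<in> beta_expansions \<beta> m x"
  using expansion_admissible expansion_sums unfolding beta_expansions_def admissible_digit_def by auto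

lemma switch_count_unbounded: "\<exists>n. j \<le> switch_count S n"
proof (induction j)
  case (Suc j)
  then obtain n where "j \<le> switch_count S n" by blast
  obtain i where "switch_point \<beta> m M (orbit S (n + i))"
    using orbits_meet_switch_points[of "\<lambda>i. orbit S (n + i)" "\<lambda>i. expansion S (n + i)"]
      orbit_in_range expansion_admissible orbit_Suc by auto
  moreover have "mono (switch_count S)"
    unfolding mono_iff_le_Suc by (simp add: switch_count_Suc)
  ultimately have "Suc j \<le> switch_count S (Suc (n + i))"
    using \<open>j \<le> switch_count S n\<close> by (auto simp: switch_count_Suc mono_def intro: order_trans)
  then show ?case by blast
qed simp

text \<open>So every choice \<open>j \<in> S\<close> is consulted, namely where the count goes past \<open>j\<close>.\<close>

lemma switch_count_attained_at_switch_point: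
  "\<exists>n. switch_count S n = j \<and> switch_point \<beta> m M (orbit S n)"
proof -
  obtain n where "Suc j \<le> switch_count S n" using switch_count_unbounded by blast
  then obtain k where "\<forall>i\<le>k. \<not> j < switch_count S i" "j < switch_count S (Suc k)"
    using ex_least_nat_less[of "\<lambda>n. j < switch_count S n" n] by (auto simp: switch_count_0)
  then have "switch_count S k \<le> j" "j < switch_count S (Suc k)" by auto
  then have "switch_point \<beta> m M (orbit S k)" "switch_count S k = j"
    by (auto simp: switch_count_Suc split: if_splits)
  then show ?thesis by blast
qed

lemma inj_expansion: "inj expansion"
proof
  fix S S' assume eq: "expansion S = expansion S'"
  have same_orbit: "orbit_and_switch_count S n = orbit_and_switch_count S' n" for n
  proof (induction n)
    case (Suc n)
    then show ?case using fun_cong[OF eq, of n]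
      by (simp add: expansion_def orbit_def switch_count_def split_beta)
  qed simp
  show "S = S'"
  proof (rule set_eqI)
    fix j
    obtain n where n: "switch_count S n = j" "switch_point \<beta> m M (orbit S n)"
      using switch_count_attained_at_switch_point by blast
    then show "j \<in> S \<longleftrightarrow> j \<in> S'"
      using fun_cong[OF eq, of n] same_orbit[of n] high_digit_admissible(2)[OF n(2)]
      by (auto simp: expansion_def chosen_digit_def orbit_def switch_count_def split: if_splits)
  qed
qed

lemma uncountable_beta_expansions: "uncountable (beta_expansions \<beta> m x)"
proof
  assume "countable (beta_expansions \<beta> m x)"
  then have "countable (range expansion)"
    by (rule countable_subset[rotated]) (auto intro: expansion_in_beta_expansions)
  then show False
    using countable_image_inj_on[OF _ inj_expansion] uncountable_UNIV_nat_set by blast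
qed

end

lemma square_less_below_root:
  fixes k :: nat and \<beta> :: real
  assumes "0 < \<beta>" "\<beta> < (real k + 1 + sqrt (real k ^ 2 + 6 * real k + 5)) / 2"
  shows "\<beta>\<^sup>2 < (real k + 1) * (\<beta> + 1)"
proof (cases "2 * \<beta> - (real k + 1) \<le> 0")
  case True
  then have "\<beta> * \<beta> \<le> (real k + 1) * \<beta>" using assms(1) by (intro mult_right_mono) auto
  then show ?thesis by (simp add: power2_eq_square algebra_simps)
next
  case False
  have "sqrt ((2 * \<beta> - (real k + 1))\<^sup>2) < sqrt (real k ^ 2 + 6 * real k + 5)"
    using False assms(2) by simp
  then have "(2 * \<beta> - (real k + 1))\<^sup>2 < real k ^ 2 + 6 * real k + 5"
    by (simp only: real_sqrt_less_iff)
  then show ?thesis by (simp add: power2_eq_square algebra_simps)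
qed

lemma attractor_bounds:
  fixes k m :: nat and \<beta> :: real
  assumes "m = 2 * k + 1" "1 < \<beta>" "\<beta>\<^sup>2 < (real k + 1) * (\<beta> + 1)"
  shows "1 < m / (\<beta> - 1)" "\<beta> < m / (\<beta> - 1) + k"
proof -
  have "\<beta> < k + 2"
  proof (rule ccontr)
    assume "\<not> \<beta> < k + 2"
    then have "(k + 2) * \<beta> \<le> \<beta> * \<beta>" using assms(2) by (intro mult_right_mono) auto
    then show False using assms(3) \<open>\<not> \<beta> < k + 2\<close> by (simp add: power2_eq_square algebra_simps)
  qed
  then show M_gt_1: "1 < m / (\<beta> - 1)" using assms(1,2) by (simp add: field_simps)
  show "\<beta> < m / (\<beta> - 1) + k"
  proof (cases "\<beta> \<le> k")
    case True
    then show ?thesis using M_gt_1 by linarith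
  next
    case False
    have "(\<beta> - k) * (\<beta> - 1) < m" using assms(1,3) by (simp add: power2_eq_square algebra_simps)
    then show ?thesis using assms(2) by (simp add: field_simps)
  qed
qed

theorem proposition3p6:
  fixes k m :: nat and \<beta> x :: real
  assumes "m = 2 * k + 1"
    and "1 < \<beta>"
    and "\<beta> < (real k + 1 + sqrt (real k ^ 2 + 6 * real k + 5)) / 2"
    and "0 < x" and "x < real m / (\<beta> - 1)"
  shows "uncountable (beta_expansions \<beta> m x)"
proof -
  define M where "M = real m / (\<beta> - 1)"
  have "\<beta>\<^sup>2 < (real k + 1) * (\<beta> + 1)" using square_less_below_root assms(2,3) by simp
  then have M: "1 < M" "\<beta> < M + k" "M * (\<beta> - 1) = m"
    using attractor_bounds[OF assms(1,2)] assms(2) unfolding M_def by auto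
  interpret recurrent_switching \<beta> m M x
    using orbit_meets_switch_point[OF assms(2) M(3) assms(1) M(2)] M assms(2,4,5)
    unfolding M_def by unfold_locales auto
  show ?thesis by (rule uncountable_beta_expansions)
qed

end
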